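(* Let $\beta_1<\beta_2<\alpha_1<\alpha_2$ and $C_{\alpha_1},C_{\beta_2}>0$, $C_{\alpha_2},C_{\beta_1}<0$. The labeled orthotoric quadrilateral with normals $u_{\alpha_i}=C_{\alpha_i}(\alpha_i,-1)$, $u_{\beta_i}=C_{\beta_i}(\beta_i,-1)$ is a rational labeled polytope (i.e. its four normals lie in a common lattice of $\mathbb R^2$) if and only if (1) $\mathbf r=\frac{(\beta_2-\alpha_1)(\alpha_2-\beta_1)}{(\beta_2-\beta_1)(\alpha_2-\alpha_1)}\in\mathbb Q$, and (2) there exist positive rational numbers $p_{\beta_1},p_{\alpha_2},p_{\alpha_1}$ with $p_{\beta_1}C_{\beta_1}=\frac{\beta_2-\alpha_1}{\alpha_1-\beta_1}C_{\beta_2}$, $p_{\alpha_2}C_{\alpha_2}=-\frac{\beta_2-\beta_1}{\alpha_2-\beta_1}C_{\beta_2}$ and $p_{\alpha_1}C_{\alpha_1}=\frac{\beta_2-\beta_1}{\alpha_1-\beta_1}C_{\beta_2}$. In particular the underlying polytope $\sigma([\alpha_1,\alpha_2]\times[\beta_1,\beta_2])$ ($\sigma(x,y)=(x+y,xy)$) is of rational type iff $\mathbf r\in\mathbb Q$.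
   Context: A polytope is of rational type if there is a lattice containing a normal vector to each facet. *)

theory Defs
  imports "HOL-Analysis.Analysis"
begin

definition lattice2 :: "(real \<times> real) set \<Rightarrow> bool" where
  "lattice2 L \<longleftrightarrow> (\<exists>e1 e2. fst e1 * snd e2 - snd e1 * fst e2 \<noteq> 0 \<and>
      L = {of_int a *\<^sub>R e1 + of_int b *\<^sub>R e2 | a b. True})"

definition normal_to :: "(real \<times> real) \<Rightarrow> (real \<times> real) set \<Rightarrow> bool" where
  "normal_to n F \<longleftrightarrow> n \<noteq> 0 \<and> (\<forall>x\<in>F. \<forall>y\<in>F. n \<bullet> (x - y) = 0)"

definition rational_type :: "(real \<times> real) set \<Rightarrow> bool" where
  "rational_type P \<longleftrightarrow> (\<exists>L. lattice2 L \<and> (\<forall>F. F facet_of P \<longrightarrow> (\<exists>n\<in>L. normal_to n F)))"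

definition sigma_map :: "real \<times> real \<Rightarrow> real \<times> real" where
  "sigma_map z = (fst z + snd z, fst z * snd z)"

definition lnormal :: "real \<Rightarrow> real \<Rightarrow> real \<times> real" where
  "lnormal C \<gamma> = (C * \<gamma>, - C)"

end

theory Submission
  imports Defs
begin

(* Everything reduces to planar linear algebra.  Four vectors u, v, w1, w2 with u, v
   independent lie in a common lattice iff w1 and w2 have rational coordinates in the
   basis (u, v); by Cramer's rule these coordinates are ratios of 2x2 determinants
   (det2), and sufficiency is obtained by shrinking u and v by a common denominator.
   For the normals u = C_b2 (b2,-1), v = C_a1 (a1,-1), w1 = C_b1 (b1,-1), w2 = C_a2 (a2,-1)
   the four coordinates are explicit rational expressions in the cross ratio r and the
   three scale factors P_b1, P_a2, P_a1 that the theorem asks to be rational, and these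
   expressions are invertible over the rationals; this gives the first equivalence.

   For the second one we describe the polytope sigma([a1,a2] x [b1,b2]) by the four
   affine inequalities cut out by the tangent lines  gamma^2 - gamma s + t = 0  of the
   parabola s^2 = 4t (gamma = a1, a2, b1, b2), show that these are irredundant, so that the
   facets are exactly the four edges, and that the normals of the edge on such a line are
   exactly the nonzero multiples of (gamma,-1).  Rational type then means that some choice
   of labels gives a lattice, which by the first part happens iff r is rational. *)


definition det2 :: "real \<times> real \<Rightarrow> real \<times> real \<Rightarrow> real" where
  "det2 x y = fst x * snd y - snd x * fst y"

lemma det2_antisym: "det2 x y = - det2 y x"
  by (simp add: det2_def)

lemma det2_int_comb:
  "det2 (of_int a *\<^sub>R e1 + of_int b *\<^sub>R e2) (of_int c *\<^sub>R e1 + of_int d *\<^sub>R e2)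
     = of_int (a * d - b * c) * det2 e1 e2"
  by (simp add: det2_def algebra_simps)

lemma cramer2:
  assumes "det2 u v \<noteq> 0"
  shows "w = (det2 w v / det2 u v) *\<^sub>R u + (det2 u w / det2 u v) *\<^sub>R v"
proof -
  have comb: "det2 u v *\<^sub>R w = det2 w v *\<^sub>R u + det2 u w *\<^sub>R v"
    by (cases u, cases v, cases w) (simp add: det2_def algebra_simps)
  have "w = (1 / det2 u v) *\<^sub>R (det2 u v *\<^sub>R w)" using assms by simp
  also have "\<dots> = (1 / det2 u v) *\<^sub>R (det2 w v *\<^sub>R u + det2 u w *\<^sub>R v)" by (simp only: comb)
  also have "\<dots> = (det2 w v / det2 u v) *\<^sub>R u + (det2 u w / det2 u v) *\<^sub>R v"
    by (simp add: scaleR_add_right)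
  finally show ?thesis .
qed

definition rat_coords :: "real \<times> real \<Rightarrow> real \<times> real \<Rightarrow> real \<times> real \<Rightarrow> bool" where
  "rat_coords u v w \<longleftrightarrow> det2 w v / det2 u v \<in> \<rat> \<and> det2 u w / det2 u v \<in> \<rat>"

lemma lattice2_rat_ratio:
  assumes "lattice2 L" "u \<in> L" "v \<in> L" "w \<in> L"
  shows "det2 w v / det2 u v \<in> \<rat>"
proof -
  obtain e1 e2 where e: "det2 e1 e2 \<noteq> 0"
    and L: "L = {of_int a *\<^sub>R e1 + of_int b *\<^sub>R e2 | a b. True}"
    using assms(1) unfolding lattice2_def det2_def by blast
  obtain a1 b1 a2 b2 a3 b3 where
    "u = of_int a1 *\<^sub>R e1 + of_int b1 *\<^sub>R e2" "v = of_int a2 *\<^sub>R e1 + of_int b2 *\<^sub>R e2"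
    "w = of_int a3 *\<^sub>R e1 + of_int b3 *\<^sub>R e2"
    using assms(2-4) L by blast
  then have "det2 w v / det2 u v = of_int (a3 * b2 - b3 * a2) / of_int (a1 * b2 - b1 * a2)"
    using e by (simp add: det2_int_comb)
  then show ?thesis by simp
qed

lemma lattice2_rat_coords:
  assumes "lattice2 L" "u \<in> L" "v \<in> L" "w \<in> L"
  shows "rat_coords u v w"
  using lattice2_rat_ratio[OF assms] lattice2_rat_ratio[OF assms(1,3,2,4)]
  by (simp add: rat_coords_def det2_antisym[of w u] det2_antisym[of v u])

lemma common_denominator:
  assumes "finite X" "X \<subseteq> \<rat>"
  shows "\<exists>N::int. N > 0 \<and> (\<forall>x\<in>X. of_int N * x \<in> \<int>)"
  using assms
proof (induction X rule: finite_induct)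
  case empty
  show ?case by (intro exI[of _ 1]) simp
next
  case (insert x X)
  then obtain N :: int where N: "N > 0" "\<forall>y\<in>X. of_int N * y \<in> \<int>" by auto
  obtain m n :: int where n: "n > 0" "x = of_int m / of_int n"
    using insert.prems by (auto elim: Rats_cases')
  have "of_int (N * n) * y \<in> \<int>" if "y \<in> X" for y
  proof -
    have "of_int (N * n) * y = of_int n * (of_int N * y)" by simp
    also have "\<dots> \<in> \<int>" by (rule Ints_mult) (use N(2) that in auto)
    finally show ?thesis .
  qed
  moreover have "of_int (N * n) * x \<in> \<int>"
  proof -
    have "of_int (N * n) * x = of_int (N * m)" using n by simp
    then show ?thesis by (simp only: Ints_of_int)
  qed
  moreover have "N * n > 0" using N(1) n(1) by simp
  ultimately show ?case by blast
qed

(* Conversely, if every w in W has rational coordinates in (u, v), the lattice spanned by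
   u/N and v/N contains u, v and W, for N a common denominator of all these coordinates. *)
lemma lattice2_through:
  assumes uv: "det2 u v \<noteq> 0" and W: "finite W" "\<forall>w\<in>W. rat_coords u v w"
  shows "\<exists>L. lattice2 L \<and> u \<in> L \<and> v \<in> L \<and> W \<subseteq> L"
proof -
  define X where "X = (\<lambda>w. det2 w v / det2 u v) ` W \<union> (\<lambda>w. det2 u w / det2 u v) ` W"
  obtain N :: int where N: "N > 0" "\<forall>x\<in>X. of_int N * x \<in> \<int>"
    using common_denominator[of X] W unfolding X_def rat_coords_def by auto
  define e1 where "e1 = (1 / of_int N) *\<^sub>R u"
  define e2 where "e2 = (1 / of_int N) *\<^sub>R v"
  define L where "L = {of_int a *\<^sub>R e1 + of_int b *\<^sub>R e2 | a b. True}"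
  have "det2 e1 e2 = det2 u v / (of_int N)^2"
    using N(1) by (simp add: e1_def e2_def det2_def power2_eq_square field_simps)
  then have "det2 e1 e2 \<noteq> 0" using uv N(1) by simp
  then have "lattice2 L" unfolding lattice2_def L_def det2_def by blast
  have inL: "x *\<^sub>R u + y *\<^sub>R v \<in> L" if xy: "of_int N * x \<in> \<int>" "of_int N * y \<in> \<int>" for x y
  proof -
    obtain a where a: "of_int N * x = of_int a" using xy(1) by (rule Ints_cases)
    obtain b where b: "of_int N * y = of_int b" using xy(2) by (rule Ints_cases)
    have "x = of_int a / of_int N" "y = of_int b / of_int N"
      using N(1) a b by (simp_all add: field_simps)
    then have "x *\<^sub>R u + y *\<^sub>R v = of_int a *\<^sub>R e1 + of_int b *\<^sub>R e2"
      by (simp add: e1_def e2_def)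
    then show ?thesis unfolding L_def by blast
  qed
  have "u \<in> L" using inL[of 1 0] by simp
  moreover have "v \<in> L" using inL[of 0 1] by simp
  moreover have "W \<subseteq> L"
  proof
    fix w assume "w \<in> W"
    then have "of_int N * (det2 w v / det2 u v) \<in> \<int>" "of_int N * (det2 u w / det2 u v) \<in> \<int>"
      using N(2) unfolding X_def by blast+
    then have "(det2 w v / det2 u v) *\<^sub>R u + (det2 u w / det2 u v) *\<^sub>R v \<in> L"
      by (rule inL)
    then show "w \<in> L" unfolding cramer2[OF uv, of w, symmetric] .
  qed
  ultimately show ?thesis using \<open>lattice2 L\<close> by (intro exI[of _ L]) simp
qed

lemma lattice2_iff_rat_coords:
  assumes "det2 u v \<noteq> 0" "finite W"
  shows "(\<exists>L. lattice2 L \<and> u \<in> L \<and> v \<in> L \<and> W \<subseteq> L) \<longleftrightarrow> (\<forall>w\<in>W. rat_coords u v w)"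
proof
  assume "\<exists>L. lattice2 L \<and> u \<in> L \<and> v \<in> L \<and> W \<subseteq> L"
  then obtain L where "lattice2 L" "u \<in> L" "v \<in> L" "W \<subseteq> L" by blast
  then show "\<forall>w\<in>W. rat_coords u v w" using lattice2_rat_coords by blast
qed (rule lattice2_through[OF assms])

lemma det2_lnormal: "det2 (lnormal c x) (lnormal d y) = c * d * (y - x)"
  by (simp add: det2_def lnormal_def algebra_simps)

lemma rat_coords_lnormal:
  assumes "c \<noteq> 0" "d \<noteq> 0" "x \<noteq> y"
  shows "rat_coords (lnormal c x) (lnormal d y) (lnormal e z) \<longleftrightarrow>
    e * (y - z) / (c * (y - x)) \<in> \<rat> \<and> e * (z - x) / (d * (y - x)) \<in> \<rat>"
  using assms by (simp add: rat_coords_def det2_lnormal)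

(* The four quantities on the left, viewed as functions of (r, p, s, q), can be inverted by
   rational operations, so they are all rational iff r, p, s, q are.  They are the shape of
   the coordinates computed in the next lemma. *)
lemma rational_coordinate_change:
  fixes p q r s :: real
  assumes "p \<noteq> 0" "q \<noteq> 0" "r \<noteq> 0" "s \<noteq> 0"
  shows "(- 1 / p \<in> \<rat> \<and> q / p \<in> \<rat> \<and> - 1 / (r * s) \<in> \<rat> \<and> q * (1 - r) / (r * s) \<in> \<rat>)
     \<longleftrightarrow> (r \<in> \<rat> \<and> p \<in> \<rat> \<and> s \<in> \<rat> \<and> q \<in> \<rat>)"
proof
  assume Q: "- 1 / p \<in> \<rat> \<and> q / p \<in> \<rat> \<and> - 1 / (r * s) \<in> \<rat> \<and> q * (1 - r) / (r * s) \<in> \<rat>"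
  define A where "A = - 1 / (r * s)"
  define B where "B = q * (1 - r) / (r * s)"
  have r: "r = 1 + B / (A * q)" using assms by (simp add: A_def B_def field_simps)
  have s: "s = - 1 / (r * A)" using assms by (simp add: A_def)
  have AB: "A \<in> \<rat>" "B \<in> \<rat>" using Q unfolding A_def B_def by blast+
  have "p \<in> \<rat>" using Q by (simp add: Rats_divide_iff)
  moreover have "q \<in> \<rat>" using Q \<open>p \<in> \<rat>\<close> assms(1) by (simp add: Rats_divide_iff)
  moreover have "r \<in> \<rat>" using AB \<open>q \<in> \<rat>\<close> unfolding r by simp
  moreover have "s \<in> \<rat>" using AB \<open>r \<in> \<rat>\<close> unfolding s by simp
  ultimately show "r \<in> \<rat> \<and> p \<in> \<rat> \<and> s \<in> \<rat> \<and> q \<in> \<rat>" by blast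
qed simp

lemma quadrilateral_rat_coords_iff:
  fixes \<alpha>1 \<alpha>2 \<beta>1 \<beta>2 C\<alpha>1 C\<alpha>2 C\<beta>1 C\<beta>2 :: real
  assumes "\<beta>1 < \<beta>2" "\<beta>2 < \<alpha>1" "\<alpha>1 < \<alpha>2"
    and "C\<alpha>1 \<noteq> 0" "C\<alpha>2 \<noteq> 0" "C\<beta>1 \<noteq> 0" "C\<beta>2 \<noteq> 0"
  defines "u \<equiv> lnormal C\<beta>2 \<beta>2" and "v \<equiv> lnormal C\<alpha>1 \<alpha>1"
    and "r \<equiv> ((\<beta>2 - \<alpha>1) * (\<alpha>2 - \<beta>1)) / ((\<beta>2 - \<beta>1) * (\<alpha>2 - \<alpha>1))"
    and "P\<beta>1 \<equiv> (\<beta>2 - \<alpha>1) / (\<alpha>1 - \<beta>1) * C\<beta>2 / C\<beta>1"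
    and "P\<alpha>2 \<equiv> - ((\<beta>2 - \<beta>1) / (\<alpha>2 - \<beta>1)) * C\<beta>2 / C\<alpha>2"
    and "P\<alpha>1 \<equiv> (\<beta>2 - \<beta>1) / (\<alpha>1 - \<beta>1) * C\<beta>2 / C\<alpha>1"
  shows "rat_coords u v (lnormal C\<beta>1 \<beta>1) \<and> rat_coords u v (lnormal C\<alpha>2 \<alpha>2)
     \<longleftrightarrow> r \<in> \<rat> \<and> P\<beta>1 \<in> \<rat> \<and> P\<alpha>2 \<in> \<rat> \<and> P\<alpha>1 \<in> \<rat>"
proof -
  define a1b1 a1b2 a2b1 a2b2 a2a1 b2b1
    where "a1b1 = \<alpha>1 - \<beta>1" and "a1b2 = \<alpha>1 - \<beta>2" and "a2b1 = \<alpha>2 - \<beta>1"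
      and "a2b2 = \<alpha>2 - \<beta>2" and "a2a1 = \<alpha>2 - \<alpha>1" and "b2b1 = \<beta>2 - \<beta>1"
  note diff_defs = a1b1_def a1b2_def a2b1_def a2b2_def a2a1_def b2b1_def
  have diffs: "\<alpha>1 - \<beta>1 = a1b1" "\<alpha>1 - \<beta>2 = a1b2" "\<alpha>2 - \<beta>1 = a2b1" "\<alpha>2 - \<beta>2 = a2b2"
    "\<alpha>2 - \<alpha>1 = a2a1" "\<beta>2 - \<beta>1 = b2b1" "\<beta>2 - \<alpha>1 = - a1b2" "\<beta>1 - \<beta>2 = - b2b1"
    "\<alpha>1 - \<alpha>2 = - a2a1"
    by (simp_all add: diff_defs)
  have d: "a1b1 \<noteq> 0" "a1b2 \<noteq> 0" "a2b1 \<noteq> 0" "a2b2 \<noteq> 0" "a2a1 \<noteq> 0" "b2b1 \<noteq> 0"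
    using assms(1-3) by (simp_all add: diff_defs)
  note C = assms(4-7)
  have r: "r = - a1b2 * a2b1 / (b2b1 * a2a1)" unfolding r_def diffs by simp
  have one_minus_r: "1 - r = a2b2 * a1b1 / (b2b1 * a2a1)"
  proof -
    have "b2b1 * a2a1 + a1b2 * a2b1 = a2b2 * a1b1" unfolding diff_defs by algebra
    then show ?thesis unfolding r using d by (simp add: field_simps)
  qed
  have P: "P\<beta>1 = - a1b2 / a1b1 * C\<beta>2 / C\<beta>1" "P\<alpha>2 = - (b2b1 / a2b1) * C\<beta>2 / C\<alpha>2"
    "P\<alpha>1 = b2b1 / a1b1 * C\<beta>2 / C\<alpha>1"
    unfolding P\<beta>1_def P\<alpha>2_def P\<alpha>1_def diffs by simp_all
  have nz: "P\<beta>1 \<noteq> 0" "P\<alpha>1 \<noteq> 0" "r \<noteq> 0" "P\<alpha>2 \<noteq> 0"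
    unfolding P r using d C by simp_all
  have "\<beta>2 \<noteq> \<alpha>1" using assms(2) by simp
  note coords = rat_coords_lnormal[OF C(4,1) this]
  have coords_\<beta>1: "rat_coords u v (lnormal C\<beta>1 \<beta>1) \<longleftrightarrow> - 1 / P\<beta>1 \<in> \<rat> \<and> P\<alpha>1 / P\<beta>1 \<in> \<rat>"
  proof -
    have "C\<beta>1 * a1b1 / (C\<beta>2 * a1b2) = - 1 / P\<beta>1"
      and "C\<beta>1 * (- b2b1) / (C\<alpha>1 * a1b2) = P\<alpha>1 / P\<beta>1"
      unfolding P using d C by (simp_all add: field_simps)
    then show ?thesis unfolding u_def v_def coords diffs by (simp only:)
  qed
  have coords_\<alpha>2: "rat_coords u v (lnormal C\<alpha>2 \<alpha>2) \<longleftrightarrow>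
      - 1 / (r * P\<alpha>2) \<in> \<rat> \<and> P\<alpha>1 * (1 - r) / (r * P\<alpha>2) \<in> \<rat>"
  proof -
    have "C\<alpha>2 * (- a2a1) / (C\<beta>2 * a1b2) = - 1 / (r * P\<alpha>2)"
      unfolding P r using d C by (simp add: field_simps)
    moreover have "C\<alpha>2 * a2b2 / (C\<alpha>1 * a1b2) = P\<alpha>1 * (1 - r) / (r * P\<alpha>2)"
      unfolding one_minus_r unfolding P r using d C by (simp add: field_simps)
    ultimately show ?thesis unfolding u_def v_def coords diffs by (simp only:)
  qed
  show ?thesis
    unfolding coords_\<beta>1 coords_\<alpha>2 using rational_coordinate_change[OF nz] by blast
qed

lemma lattice2_through_normals_iff:
  fixes \<alpha>1 \<alpha>2 \<beta>1 \<beta>2 C\<alpha>1 C\<alpha>2 C\<beta>1 C\<beta>2 :: real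
  assumes order: "\<beta>1 < \<beta>2" "\<beta>2 < \<alpha>1" "\<alpha>1 < \<alpha>2"
    and C: "C\<alpha>1 \<noteq> 0" "C\<alpha>2 \<noteq> 0" "C\<beta>1 \<noteq> 0" "C\<beta>2 \<noteq> 0"
  shows "(\<exists>L. lattice2 L \<and> lnormal C\<alpha>1 \<alpha>1 \<in> L \<and> lnormal C\<alpha>2 \<alpha>2 \<in> L
               \<and> lnormal C\<beta>1 \<beta>1 \<in> L \<and> lnormal C\<beta>2 \<beta>2 \<in> L) \<longleftrightarrow>
    ((\<beta>2 - \<alpha>1) * (\<alpha>2 - \<beta>1)) / ((\<beta>2 - \<beta>1) * (\<alpha>2 - \<alpha>1)) \<in> \<rat> \<and>
    (\<beta>2 - \<alpha>1) / (\<alpha>1 - \<beta>1) * C\<beta>2 / C\<beta>1 \<in> \<rat> \<and>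
    - ((\<beta>2 - \<beta>1) / (\<alpha>2 - \<beta>1)) * C\<beta>2 / C\<alpha>2 \<in> \<rat> \<and>
    (\<beta>2 - \<beta>1) / (\<alpha>1 - \<beta>1) * C\<beta>2 / C\<alpha>1 \<in> \<rat>"
proof -
  define u v where "u = lnormal C\<beta>2 \<beta>2" and "v = lnormal C\<alpha>1 \<alpha>1"
  have "det2 u v \<noteq> 0" using order C by (simp add: u_def v_def det2_lnormal)
  then have "(\<exists>L. lattice2 L \<and> lnormal C\<alpha>1 \<alpha>1 \<in> L \<and> lnormal C\<alpha>2 \<alpha>2 \<in> L
               \<and> lnormal C\<beta>1 \<beta>1 \<in> L \<and> lnormal C\<beta>2 \<beta>2 \<in> L) \<longleftrightarrow>
      rat_coords u v (lnormal C\<beta>1 \<beta>1) \<and> rat_coords u v (lnormal C\<alpha>2 \<alpha>2)"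
    using lattice2_iff_rat_coords[of u v "{lnormal C\<beta>1 \<beta>1, lnormal C\<alpha>2 \<alpha>2}"]
    unfolding u_def v_def by auto
  then show ?thesis
    unfolding u_def v_def quadrilateral_rat_coords_iff[OF order C] .
qed

lemma positive_rational_factor_iff:
  fixes c x :: real
  assumes "c \<noteq> 0" "0 < x / c"
  shows "(\<exists>p. p \<in> \<rat> \<and> 0 < p \<and> p * c = x) \<longleftrightarrow> x / c \<in> \<rat>"
proof -
  have "p * c = x \<longleftrightarrow> p = x / c" for p using assms(1) by (auto simp: field_simps)
  then show ?thesis using assms(2) by auto
qed

(* First part of the theorem: with the sign conventions of an orthotoric quadrilateral the
   scale factors are positive, so the criterion takes the form stated in the paper. *)
lemma labelled_quadrilateral_rational_iff:
  fixes \<alpha>1 \<alpha>2 \<beta>1 \<beta>2 C\<alpha>1 C\<alpha>2 C\<beta>1 C\<beta>2 :: real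
  assumes order: "\<beta>1 < \<beta>2" "\<beta>2 < \<alpha>1" "\<alpha>1 < \<alpha>2"
    and signs: "C\<alpha>1 > 0" "C\<beta>2 > 0" "C\<alpha>2 < 0" "C\<beta>1 < 0"
  defines "r \<equiv> ((\<beta>2 - \<alpha>1) * (\<alpha>2 - \<beta>1)) / ((\<beta>2 - \<beta>1) * (\<alpha>2 - \<alpha>1))"
  shows "(\<exists>L. lattice2 L \<and> lnormal C\<alpha>1 \<alpha>1 \<in> L \<and> lnormal C\<alpha>2 \<alpha>2 \<in> L
               \<and> lnormal C\<beta>1 \<beta>1 \<in> L \<and> lnormal C\<beta>2 \<beta>2 \<in> L)
          \<longleftrightarrow>
          (r \<in> \<rat> \<and>
           (\<exists>p\<beta>1 p\<alpha>2 p\<alpha>1. p\<beta>1 \<in> \<rat> \<and> p\<alpha>2 \<in> \<rat> \<and> p\<alpha>1 \<in> \<rat> \<and>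
              p\<beta>1 > 0 \<and> p\<alpha>2 > 0 \<and> p\<alpha>1 > 0 \<and>
              p\<beta>1 * C\<beta>1 = (\<beta>2 - \<alpha>1) / (\<alpha>1 - \<beta>1) * C\<beta>2 \<and>
              p\<alpha>2 * C\<alpha>2 = - ((\<beta>2 - \<beta>1) / (\<alpha>2 - \<beta>1)) * C\<beta>2 \<and>
              p\<alpha>1 * C\<alpha>1 = (\<beta>2 - \<beta>1) / (\<alpha>1 - \<beta>1) * C\<beta>2))"
    (is "?lattice \<longleftrightarrow> r \<in> \<rat> \<and> ?factors")
proof -
  define X\<beta>1 X\<alpha>2 X\<alpha>1
    where "X\<beta>1 = (\<beta>2 - \<alpha>1) / (\<alpha>1 - \<beta>1) * C\<beta>2"
      and "X\<alpha>2 = - ((\<beta>2 - \<beta>1) / (\<alpha>2 - \<beta>1)) * C\<beta>2"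
      and "X\<alpha>1 = (\<beta>2 - \<beta>1) / (\<alpha>1 - \<beta>1) * C\<beta>2"
  have C: "C\<alpha>1 \<noteq> 0" "C\<alpha>2 \<noteq> 0" "C\<beta>1 \<noteq> 0" "C\<beta>2 \<noteq> 0" using signs by auto
  have "?lattice \<longleftrightarrow> r \<in> \<rat> \<and> X\<beta>1 / C\<beta>1 \<in> \<rat> \<and> X\<alpha>2 / C\<alpha>2 \<in> \<rat> \<and> X\<alpha>1 / C\<alpha>1 \<in> \<rat>"
    unfolding r_def X\<beta>1_def X\<alpha>2_def X\<alpha>1_def by (rule lattice2_through_normals_iff[OF order C])
  moreover have "?factors \<longleftrightarrow> X\<beta>1 / C\<beta>1 \<in> \<rat> \<and> X\<alpha>2 / C\<alpha>2 \<in> \<rat> \<and> X\<alpha>1 / C\<alpha>1 \<in> \<rat>"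
  proof -
    have pos: "0 < X\<beta>1 / C\<beta>1" "0 < X\<alpha>2 / C\<alpha>2" "0 < X\<alpha>1 / C\<alpha>1"
      unfolding X\<beta>1_def X\<alpha>2_def X\<alpha>1_def using order signs
      by (simp_all add: zero_less_divide_iff zero_less_mult_iff divide_less_0_iff mult_less_0_iff)
    have "?factors \<longleftrightarrow> (\<exists>p. p \<in> \<rat> \<and> 0 < p \<and> p * C\<beta>1 = X\<beta>1) \<and>
        (\<exists>p. p \<in> \<rat> \<and> 0 < p \<and> p * C\<alpha>2 = X\<alpha>2) \<and> (\<exists>p. p \<in> \<rat> \<and> 0 < p \<and> p * C\<alpha>1 = X\<alpha>1)"
      unfolding X\<beta>1_def X\<alpha>2_def X\<alpha>1_def by blast
    then show ?thesis
      unfolding positive_rational_factor_iff[OF C(3) pos(1)] positive_rational_factor_iff[OF C(2) pos(2)]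
        positive_rational_factor_iff[OF C(1) pos(3)] .
  qed
  ultimately show ?thesis by blast
qed

lemma facet_of_irredundant_halfspaces:
  fixes a :: "'i \<Rightarrow> 'a::euclidean_space" and b :: "'i \<Rightarrow> real"
  assumes fin: "finite I"
    and P: "P = {x. \<forall>i\<in>I. a i \<bullet> x \<le> b i}"
    and full: "affine hull P = UNIV"
    and nz: "\<And>i. i \<in> I \<Longrightarrow> a i \<noteq> 0"
    and irred: "\<And>i. i \<in> I \<Longrightarrow> \<exists>w. b i < a i \<bullet> w \<and> (\<forall>j\<in>I. j \<noteq> i \<longrightarrow> a j \<bullet> w \<le> b j)"
  shows "F facet_of P \<longleftrightarrow> (\<exists>i\<in>I. F = P \<inter> {x. a i \<bullet> x = b i})"
proof -
  define H where "H i = {x. a i \<bullet> x \<le> b i}" for i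
  have "inj_on H I"
  proof (rule inj_onI)
    fix i j assume "i \<in> I" "j \<in> I" "H i = H j"
    obtain w where "b i < a i \<bullet> w" "\<forall>j\<in>I. j \<noteq> i \<longrightarrow> a j \<bullet> w \<le> b j"
      using irred[OF \<open>i \<in> I\<close>] by blast
    then show "i = j" using \<open>j \<in> I\<close> \<open>H i = H j\<close> unfolding H_def by (metis mem_Collect_eq not_le)
  qed
  define idx where "idx = the_inv_into I H"
  have idx: "idx (H i) = i" if "i \<in> I" for i
    using \<open>inj_on H I\<close> that by (simp add: idx_def the_inv_into_f_f)
  have seq: "P = affine hull P \<inter> \<Inter>(H ` I)" unfolding full by (auto simp: P H_def)
  have faceq: "(a \<circ> idx) h \<noteq> 0 \<and> h = {x. (a \<circ> idx) h \<bullet> x \<le> (b \<circ> idx) h}" if "h \<in> H ` I" for h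
    using that nz idx unfolding H_def by auto
  have psub: "P \<subset> affine hull P \<inter> \<Inter>F'" if "F' \<subset> H ` I" for F'
  proof -
    obtain i where i: "i \<in> I" "H i \<notin> F'" using \<open>F' \<subset> H ` I\<close> by blast
    obtain w where w: "b i < a i \<bullet> w" "\<forall>j\<in>I. j \<noteq> i \<longrightarrow> a j \<bullet> w \<le> b j"
      using irred[OF i(1)] by blast
    have "w \<in> \<Inter>F'"
    proof
      fix h assume "h \<in> F'"
      then obtain j where "j \<in> I" "h = H j" "j \<noteq> i" using \<open>F' \<subset> H ` I\<close> i(2) by blast
      then show "w \<in> h" using w(2) unfolding H_def by simp
    qed
    moreover have "w \<notin> P" using w(1) i(1) unfolding P by (auto simp: not_le)
    moreover have "P \<subseteq> \<Inter>F'" using \<open>F' \<subset> H ` I\<close> seq by blast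
    ultimately show ?thesis unfolding full by blast
  qed
  have "F facet_of P \<longleftrightarrow> (\<exists>h. h \<in> H ` I \<and> F = P \<inter> {x. (a \<circ> idx) h \<bullet> x = (b \<circ> idx) h})"
    using fin by (intro facet_of_polyhedron_explicit[OF _ seq faceq psub]) auto
  also have "\<dots> \<longleftrightarrow> (\<exists>i\<in>I. F = P \<inter> {x. a i \<bullet> x = b i})"
    using idx by auto
  finally show ?thesis .
qed

(* The affine function vanishing on the line sigma({gamma} x R), the tangent at gamma of
   the parabola bounding the image of sigma. *)
definition tangent_form :: "real \<Rightarrow> real \<times> real \<Rightarrow> real" where
  "tangent_form \<gamma> z = \<gamma>\<^sup>2 - \<gamma> * fst z + snd z"

lemma tangent_form_sigma: "tangent_form \<gamma> (sigma_map (x, y)) = (\<gamma> - x) * (\<gamma> - y)"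
  by (simp add: tangent_form_def sigma_map_def power2_eq_square algebra_simps)

lemma inner_lnormal: "lnormal c \<gamma> \<bullet> z = c * \<gamma>\<^sup>2 - c * tangent_form \<gamma> z"
  by (cases z) (simp add: lnormal_def tangent_form_def inner_prod_def algebra_simps power2_eq_square)

lemma continuous_tangent_form: "continuous_on UNIV (tangent_form \<gamma>)"
  unfolding tangent_form_def by (intro continuous_intros)

lemma sigma_preimage:
  assumes "tangent_form \<gamma> z \<le> 0"
  shows "\<exists>x y. y \<le> \<gamma> \<and> \<gamma> \<le> x \<and> z = sigma_map (x, y)"
proof -
  obtain s t where z: "z = (s, t)" by (cases z)
  define \<Delta> where "\<Delta> = s\<^sup>2 - 4 * t"
  have "tangent_form \<gamma> z = (\<gamma> - s / 2)\<^sup>2 - \<Delta> / 4"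
    by (simp add: z tangent_form_def \<Delta>_def power2_eq_square field_simps)
  then have "\<Delta> \<ge> 0" using assms zero_le_power2[of "\<gamma> - s / 2"] by linarith
  define x y where "x = (s + sqrt \<Delta>) / 2" and "y = (s - sqrt \<Delta>) / 2"
  have "x * y = (s\<^sup>2 - (sqrt \<Delta>)\<^sup>2) / 4" by (simp add: x_def y_def power2_eq_square field_simps)
  then have "z = sigma_map (x, y)"
    using \<open>\<Delta> \<ge> 0\<close> by (simp add: z sigma_map_def x_def y_def \<Delta>_def field_simps)
  moreover have "y \<le> x" using \<open>\<Delta> \<ge> 0\<close> by (simp add: x_def y_def)
  moreover have "(\<gamma> - x) * (\<gamma> - y) \<le> 0" using assms \<open>z = sigma_map (x, y)\<close> tangent_form_sigma by simp
  ultimately have "y \<le> \<gamma>" "\<gamma> \<le> x" by (auto simp: mult_le_0_iff)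
  with \<open>z = sigma_map (x, y)\<close> show ?thesis by blast
qed

lemma sigma_rectangle_eq:
  fixes \<alpha>1 \<alpha>2 \<beta>1 \<beta>2 :: real
  assumes "\<beta>1 < \<beta>2" "\<beta>2 < \<alpha>1" "\<alpha>1 < \<alpha>2"
  shows "sigma_map ` ({\<alpha>1..\<alpha>2} \<times> {\<beta>1..\<beta>2}) = {z. tangent_form \<alpha>1 z \<le> 0 \<and>
    tangent_form \<beta>2 z \<le> 0 \<and> 0 \<le> tangent_form \<alpha>2 z \<and> 0 \<le> tangent_form \<beta>1 z}"
    (is "?S = ?H")
proof
  show "?S \<subseteq> ?H"
    using assms by (auto simp: tangent_form_sigma mult_le_0_iff zero_le_mult_iff)
next
  show "?H \<subseteq> ?S"
  proof
    fix z assume z: "z \<in> ?H"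
    then obtain x y where xy: "y \<le> \<alpha>1" "\<alpha>1 \<le> x" "z = sigma_map (x, y)"
      using sigma_preimage[of \<alpha>1 z] by auto
    have "(\<beta>2 - x) * (\<beta>2 - y) \<le> 0" "0 \<le> (\<alpha>2 - x) * (\<alpha>2 - y)" "0 \<le> (\<beta>1 - x) * (\<beta>1 - y)"
      using z xy(3) by (simp_all add: tangent_form_sigma)
    then have "x \<le> \<alpha>2" "\<beta>1 \<le> y" "y \<le> \<beta>2"
      using xy(1,2) assms by (auto simp: mult_le_0_iff zero_le_mult_iff)
    then show "z \<in> ?S" using xy by auto
  qed
qed

(* The four sides of the image of the rectangle: a side (gamma, e) stands for the
   constraint 0 <= e * tangent_form gamma z, i.e. lnormal e gamma . z <= e * gamma^2. *)
definition rectangle_sides :: "real \<Rightarrow> real \<Rightarrow> real \<Rightarrow> real \<Rightarrow> (real \<times> real) set" where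
  "rectangle_sides \<alpha>1 \<alpha>2 \<beta>1 \<beta>2 = {(\<alpha>1, -1), (\<beta>2, -1), (\<alpha>2, 1), (\<beta>1, 1)}"

lemma lnormal_halfspace: "lnormal e \<gamma> \<bullet> z \<le> e * \<gamma>\<^sup>2 \<longleftrightarrow> 0 \<le> e * tangent_form \<gamma> z"
  by (auto simp: inner_lnormal)

(* The image of the rectangle has interior points, e.g. the image of its centre. *)
lemma sigma_rectangle_affine_hull:
  fixes \<alpha>1 \<alpha>2 \<beta>1 \<beta>2 :: real
  assumes order: "\<beta>1 < \<beta>2" "\<beta>2 < \<alpha>1" "\<alpha>1 < \<alpha>2"
  shows "affine hull (sigma_map ` ({\<alpha>1..\<alpha>2} \<times> {\<beta>1..\<beta>2})) = UNIV"
proof -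
  define T where "T = {z. tangent_form \<alpha>1 z < 0 \<and> tangent_form \<beta>2 z < 0 \<and>
    0 < tangent_form \<alpha>2 z \<and> 0 < tangent_form \<beta>1 z}"
  have "open T" unfolding T_def
    by (intro open_Collect_conj open_Collect_less continuous_tangent_form continuous_on_const)
  moreover have "sigma_map ((\<alpha>1 + \<alpha>2) / 2, (\<beta>1 + \<beta>2) / 2) \<in> T"
    using order by (simp add: T_def tangent_form_sigma zero_less_mult_iff mult_less_0_iff)
  moreover have "T \<subseteq> sigma_map ` ({\<alpha>1..\<alpha>2} \<times> {\<beta>1..\<beta>2})"
    unfolding T_def sigma_rectangle_eq[OF order] by auto
  ultimately show ?thesis by (metis affine_hull_open empty_iff hull_mono top.extremum_unique)
qed

lemma rectangle_side_irredundant: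
  fixes \<alpha>1 \<alpha>2 \<beta>1 \<beta>2 :: real
  assumes order: "\<beta>1 < \<beta>2" "\<beta>2 < \<alpha>1" "\<alpha>1 < \<alpha>2"
    and i: "i \<in> rectangle_sides \<alpha>1 \<alpha>2 \<beta>1 \<beta>2"
  shows "\<exists>x y. snd i * tangent_form (fst i) (sigma_map (x, y)) < 0 \<and>
    (\<forall>j\<in>rectangle_sides \<alpha>1 \<alpha>2 \<beta>1 \<beta>2. j \<noteq> i \<longrightarrow> 0 \<le> snd j * tangent_form (fst j) (sigma_map (x, y)))"
proof -
  note signs = tangent_form_sigma zero_le_mult_iff zero_less_mult_iff mult_le_0_iff mult_less_0_iff
  consider "i = (\<alpha>1, -1)" | "i = (\<beta>2, -1)" | "i = (\<alpha>2, 1)" | "i = (\<beta>1, 1)"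
    using i unfolding rectangle_sides_def by blast
  then show ?thesis
  proof cases
    case 1
    show ?thesis using order
      by (intro exI[of _ "(\<beta>2 + \<alpha>1) / 2"] exI[of _ \<beta>2]) (auto simp: rectangle_sides_def 1 signs)
  next
    case 2
    show ?thesis using order
      by (intro exI[of _ \<alpha>1] exI[of _ "(\<beta>2 + \<alpha>1) / 2"]) (auto simp: rectangle_sides_def 2 signs)
  next
    case 3
    show ?thesis using order
      by (intro exI[of _ "\<alpha>2 + 1"] exI[of _ \<beta>2]) (auto simp: rectangle_sides_def 3 signs)
  next
    case 4
    show ?thesis using order
      by (intro exI[of _ \<alpha>1] exI[of _ "\<beta>1 - 1"]) (auto simp: rectangle_sides_def 4 signs)
  qed
qed

lemma sigma_rectangle_facets:
  fixes \<alpha>1 \<alpha>2 \<beta>1 \<beta>2 :: real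
  assumes order: "\<beta>1 < \<beta>2" "\<beta>2 < \<alpha>1" "\<alpha>1 < \<alpha>2"
  defines "S \<equiv> sigma_map ` ({\<alpha>1..\<alpha>2} \<times> {\<beta>1..\<beta>2})"
  shows "F facet_of S \<longleftrightarrow> (\<exists>\<gamma>\<in>{\<alpha>1, \<alpha>2, \<beta>1, \<beta>2}. F = S \<inter> {z. tangent_form \<gamma> z = 0})"
proof -
  define I where "I = rectangle_sides \<alpha>1 \<alpha>2 \<beta>1 \<beta>2"
  define a where "a i = lnormal (snd i) (fst i)" for i :: "real \<times> real"
  define b where "b i = snd i * (fst i)\<^sup>2" for i :: "real \<times> real"
  have halfspace: "a i \<bullet> z \<le> b i \<longleftrightarrow> 0 \<le> snd i * tangent_form (fst i) z" for i z
    unfolding a_def b_def by (rule lnormal_halfspace)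
  have S: "S = {z. \<forall>i\<in>I. a i \<bullet> z \<le> b i}"
    unfolding S_def sigma_rectangle_eq[OF order] halfspace I_def rectangle_sides_def by auto
  have "\<exists>w. b i < a i \<bullet> w \<and> (\<forall>j\<in>I. j \<noteq> i \<longrightarrow> a j \<bullet> w \<le> b j)" if "i \<in> I" for i
    using rectangle_side_irredundant[OF order, of i] that halfspace unfolding I_def
    by (meson not_le)
  moreover have "a i \<noteq> 0" if "i \<in> I" for i
    using that by (auto simp: I_def rectangle_sides_def a_def lnormal_def zero_prod_def)
  ultimately have "F facet_of S \<longleftrightarrow> (\<exists>i\<in>I. F = S \<inter> {z. a i \<bullet> z = b i})"
    using sigma_rectangle_affine_hull[OF order, folded S_def]
    by (intro facet_of_irredundant_halfspaces[OF _ S]) (auto simp: I_def rectangle_sides_def)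
  also have "\<dots> \<longleftrightarrow> (\<exists>\<gamma>\<in>{\<alpha>1, \<alpha>2, \<beta>1, \<beta>2}. F = S \<inter> {z. tangent_form \<gamma> z = 0})"
  proof -
    have "{z. a i \<bullet> z = b i} = {z. tangent_form (fst i) z = 0}" if "i \<in> I" for i
      using that by (auto simp: I_def rectangle_sides_def a_def b_def inner_lnormal)
    then show ?thesis unfolding I_def rectangle_sides_def by auto
  qed
  finally show ?thesis .
qed

lemma normal_to_tangent_segment_iff:
  assumes F: "F \<subseteq> {z. tangent_form \<gamma> z = 0}" and pq: "p \<in> F" "q \<in> F" "p \<noteq> q"
  shows "normal_to n F \<longleftrightarrow> (\<exists>c. c \<noteq> 0 \<and> n = lnormal c \<gamma>)"
proof
  assume n: "normal_to n F"
  have line: "snd p = \<gamma> * fst p - \<gamma>\<^sup>2" "snd q = \<gamma> * fst q - \<gamma>\<^sup>2"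
    using F pq unfolding tangent_form_def by auto
  then have "fst p \<noteq> fst q" using pq(3) by (auto simp: prod_eq_iff)
  have "n \<bullet> (p - q) = fst n * (fst p - fst q) + snd n * (snd p - snd q)"
    by (simp add: inner_prod_def algebra_simps)
  also have "\<dots> = (fst p - fst q) * (fst n + \<gamma> * snd n)"
    unfolding line by (simp add: algebra_simps)
  finally have calc: "n \<bullet> (p - q) = (fst p - fst q) * (fst n + \<gamma> * snd n)" .
  have "n \<bullet> (p - q) = 0" using n pq unfolding normal_to_def by blast
  then have "(fst p - fst q) * (fst n + \<gamma> * snd n) = 0" unfolding calc .
  then have "fst n = - \<gamma> * snd n" using \<open>fst p \<noteq> fst q\<close> by simp
  moreover have "n \<noteq> 0" using n unfolding normal_to_def by blast
  ultimately show "\<exists>c. c \<noteq> 0 \<and> n = lnormal c \<gamma>"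
    by (intro exI[of _ "- snd n"]) (auto simp: lnormal_def prod_eq_iff)
next
  assume "\<exists>c. c \<noteq> 0 \<and> n = lnormal c \<gamma>"
  then obtain c where "c \<noteq> 0" "n = lnormal c \<gamma>" by blast
  moreover have "lnormal c \<gamma> \<bullet> (x - y) = 0" if "x \<in> F" "y \<in> F" for x y
  proof -
    have "tangent_form \<gamma> x = 0" "tangent_form \<gamma> y = 0" using F that by auto
    then show ?thesis by (simp add: inner_diff_right inner_lnormal)
  qed
  ultimately show "normal_to n F"
    by (auto simp: normal_to_def lnormal_def zero_prod_def)
qed

lemma rational_type_sigma_rectangle_normals:
  fixes \<alpha>1 \<alpha>2 \<beta>1 \<beta>2 :: real
  assumes order: "\<beta>1 < \<beta>2" "\<beta>2 < \<alpha>1" "\<alpha>1 < \<alpha>2"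
  shows "rational_type (sigma_map ` ({\<alpha>1..\<alpha>2} \<times> {\<beta>1..\<beta>2})) \<longleftrightarrow>
    (\<exists>L. lattice2 L \<and> (\<forall>\<gamma>\<in>{\<alpha>1, \<alpha>2, \<beta>1, \<beta>2}. \<exists>c. c \<noteq> 0 \<and> lnormal c \<gamma> \<in> L))"
proof -
  define S where "S = sigma_map ` ({\<alpha>1..\<alpha>2} \<times> {\<beta>1..\<beta>2})"
  define edge where "edge \<gamma> = S \<inter> {z. tangent_form \<gamma> z = 0}" for \<gamma>
  have "\<exists>p q. p \<in> edge \<gamma> \<and> q \<in> edge \<gamma> \<and> p \<noteq> q" if "\<gamma> \<in> {\<alpha>1, \<alpha>2, \<beta>1, \<beta>2}" for \<gamma>
  proof -
    have vertical: "sigma_map (\<gamma>, \<beta>1) \<in> edge \<gamma> \<and> sigma_map (\<gamma>, \<beta>2) \<in> edge \<gamma>" if "\<gamma> \<in> {\<alpha>1, \<alpha>2}"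
      using that order by (auto simp: edge_def S_def tangent_form_sigma)
    have horizontal: "sigma_map (\<alpha>1, \<gamma>) \<in> edge \<gamma> \<and> sigma_map (\<alpha>2, \<gamma>) \<in> edge \<gamma>" if "\<gamma> \<in> {\<beta>1, \<beta>2}"
      using that order by (auto simp: edge_def S_def tangent_form_sigma)
    have "sigma_map (\<gamma>, \<beta>1) \<noteq> sigma_map (\<gamma>, \<beta>2)" "sigma_map (\<alpha>1, \<gamma>) \<noteq> sigma_map (\<alpha>2, \<gamma>)"
      using order by (auto simp: sigma_map_def)
    then show ?thesis using that vertical horizontal by blast
  qed
  then have normals: "normal_to n (edge \<gamma>) \<longleftrightarrow> (\<exists>c. c \<noteq> 0 \<and> n = lnormal c \<gamma>)"
    if "\<gamma> \<in> {\<alpha>1, \<alpha>2, \<beta>1, \<beta>2}" for \<gamma> n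
    using that normal_to_tangent_segment_iff[of "edge \<gamma>" \<gamma>] unfolding edge_def by blast
  have "rational_type S \<longleftrightarrow>
      (\<exists>L. lattice2 L \<and> (\<forall>\<gamma>\<in>{\<alpha>1, \<alpha>2, \<beta>1, \<beta>2}. \<exists>n\<in>L. normal_to n (edge \<gamma>)))"
    unfolding rational_type_def S_def sigma_rectangle_facets[OF order] edge_def by blast
  also have "\<dots> \<longleftrightarrow> (\<exists>L. lattice2 L \<and> (\<forall>\<gamma>\<in>{\<alpha>1, \<alpha>2, \<beta>1, \<beta>2}. \<exists>c. c \<noteq> 0 \<and> lnormal c \<gamma> \<in> L))"
    using normals by (intro ex_cong1 conj_cong ball_cong) auto
  finally show ?thesis unfolding S_def .
qed

lemma rational_type_sigma_rectangle_iff: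
  fixes \<alpha>1 \<alpha>2 \<beta>1 \<beta>2 :: real
  assumes order: "\<beta>1 < \<beta>2" "\<beta>2 < \<alpha>1" "\<alpha>1 < \<alpha>2"
  shows "rational_type (sigma_map ` ({\<alpha>1..\<alpha>2} \<times> {\<beta>1..\<beta>2})) \<longleftrightarrow>
    ((\<beta>2 - \<alpha>1) * (\<alpha>2 - \<beta>1)) / ((\<beta>2 - \<beta>1) * (\<alpha>2 - \<alpha>1)) \<in> \<rat>"
    (is "_ \<longleftrightarrow> ?r \<in> \<rat>")
  unfolding rational_type_sigma_rectangle_normals[OF order]
proof
  assume "\<exists>L. lattice2 L \<and> (\<forall>\<gamma>\<in>{\<alpha>1, \<alpha>2, \<beta>1, \<beta>2}. \<exists>c. c \<noteq> 0 \<and> lnormal c \<gamma> \<in> L)"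
  then obtain L c\<alpha>1 c\<alpha>2 c\<beta>1 c\<beta>2 where "lattice2 L"
    and "c\<alpha>1 \<noteq> 0" "c\<alpha>2 \<noteq> 0" "c\<beta>1 \<noteq> 0" "c\<beta>2 \<noteq> 0"
    and "lnormal c\<alpha>1 \<alpha>1 \<in> L" "lnormal c\<alpha>2 \<alpha>2 \<in> L" "lnormal c\<beta>1 \<beta>1 \<in> L" "lnormal c\<beta>2 \<beta>2 \<in> L"
    by (metis insert_iff)
  then show "?r \<in> \<rat>"
    using lattice2_through_normals_iff[OF order, of c\<alpha>1 c\<alpha>2 c\<beta>1 c\<beta>2] by blast
next
  assume "?r \<in> \<rat>"
  (* Scale the normals so that the three factors in the criterion become 1. *)
  define C\<alpha>1 C\<alpha>2 C\<beta>1 :: real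
    where "C\<alpha>1 = (\<beta>2 - \<beta>1) / (\<alpha>1 - \<beta>1)" and "C\<alpha>2 = - ((\<beta>2 - \<beta>1) / (\<alpha>2 - \<beta>1))"
      and "C\<beta>1 = (\<beta>2 - \<alpha>1) / (\<alpha>1 - \<beta>1)"
  have C: "C\<alpha>1 \<noteq> 0" "C\<alpha>2 \<noteq> 0" "C\<beta>1 \<noteq> 0" "(1::real) \<noteq> 0"
    using order by (simp_all add: C\<alpha>1_def C\<alpha>2_def C\<beta>1_def)
  have "\<exists>L. lattice2 L \<and> lnormal C\<alpha>1 \<alpha>1 \<in> L \<and> lnormal C\<alpha>2 \<alpha>2 \<in> L
               \<and> lnormal C\<beta>1 \<beta>1 \<in> L \<and> lnormal 1 \<beta>2 \<in> L"
  proof -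
    have "(\<beta>2 - \<alpha>1) / (\<alpha>1 - \<beta>1) * 1 / C\<beta>1 = 1" "- ((\<beta>2 - \<beta>1) / (\<alpha>2 - \<beta>1)) * 1 / C\<alpha>2 = 1"
      "(\<beta>2 - \<beta>1) / (\<alpha>1 - \<beta>1) * 1 / C\<alpha>1 = 1"
      using C by (simp_all add: C\<alpha>1_def C\<alpha>2_def C\<beta>1_def)
    then show ?thesis
      using \<open>?r \<in> \<rat>\<close> unfolding lattice2_through_normals_iff[OF order C] by simp
  qed
  then show "\<exists>L. lattice2 L \<and> (\<forall>\<gamma>\<in>{\<alpha>1, \<alpha>2, \<beta>1, \<beta>2}. \<exists>c. c \<noteq> 0 \<and> lnormal c \<gamma> \<in> L)"
    using C by blast
qed

theorem mainTheorem14: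
  fixes \<alpha>1 \<alpha>2 \<beta>1 \<beta>2 C\<alpha>1 C\<alpha>2 C\<beta>1 C\<beta>2 :: real
  assumes "\<beta>1 < \<beta>2" and "\<beta>2 < \<alpha>1" and "\<alpha>1 < \<alpha>2"
    and "C\<alpha>1 > 0" and "C\<beta>2 > 0" and "C\<alpha>2 < 0" and "C\<beta>1 < 0"
  defines "r \<equiv> ((\<beta>2 - \<alpha>1) * (\<alpha>2 - \<beta>1)) / ((\<beta>2 - \<beta>1) * (\<alpha>2 - \<alpha>1))"
  shows "((\<exists>L. lattice2 L \<and> lnormal C\<alpha>1 \<alpha>1 \<in> L \<and> lnormal C\<alpha>2 \<alpha>2 \<in> L
               \<and> lnormal C\<beta>1 \<beta>1 \<in> L \<and> lnormal C\<beta>2 \<beta>2 \<in> L)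
          \<longleftrightarrow>
          (r \<in> \<rat> \<and>
           (\<exists>p\<beta>1 p\<alpha>2 p\<alpha>1. p\<beta>1 \<in> \<rat> \<and> p\<alpha>2 \<in> \<rat> \<and> p\<alpha>1 \<in> \<rat> \<and>
              p\<beta>1 > 0 \<and> p\<alpha>2 > 0 \<and> p\<alpha>1 > 0 \<and>
              p\<beta>1 * C\<beta>1 = (\<beta>2 - \<alpha>1) / (\<alpha>1 - \<beta>1) * C\<beta>2 \<and>
              p\<alpha>2 * C\<alpha>2 = - ((\<beta>2 - \<beta>1) / (\<alpha>2 - \<beta>1)) * C\<beta>2 \<and>
              p\<alpha>1 * C\<alpha>1 = (\<beta>2 - \<beta>1) / (\<alpha>1 - \<beta>1) * C\<beta>2)))
        \<and> (rational_type (sigma_map ` ({\<alpha>1..\<alpha>2} \<times> {\<beta>1..\<beta>2})) \<longleftrightarrow> r \<in> \<rat>)"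
  unfolding r_def
  using labelled_quadrilateral_rational_iff[OF assms(1-7)] rational_type_sigma_rectangle_iff[OF assms(1-3)]
  by (intro conjI)

end
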